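(* Let $n\ge1$, $G\le S_n$ and $\chi$ a character of $G$. The following are equivalent: (1) $d_\chi^G(A)=d_\chi^G(A^T)$ for every $A\in M_n(\mathbb C)$; (2) $d_\chi^G(AB)=d_\chi^G(BA)$ for all $A,B\in\mathbb S_n(\mathbb C)$; (3) $\chi$ is real valued.
   Context: A character of $G\le S_n$ is a function $g\mapsto\operatorname{tr}(\rho(g))$ for some homomorphism $\rho:G\to GL_m(\mathbb C)$, $m\ge1$. $\mathbb S_n(\mathbb C)$ is the set of complex symmetric $n\times n$ matrices. $d_\chi^G(A)=\sum_{\sigma\in G}\chi(\sigma)\prod_{i=1}^n A_{i\,\sigma(i)}$ for $A\in M_n(\mathbb C)$. *)

theory Defs
  imports "HOL-Combinatorics.Permutations" "Jordan_Normal_Form.Matrix"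
begin

definition perm_subgroup :: "nat \<Rightarrow> (nat \<Rightarrow> nat) set \<Rightarrow> bool" where
  "perm_subgroup n G \<longleftrightarrow> G \<subseteq> {p. p permutes {0..<n}} \<and> id \<in> G \<and>
     (\<forall>p\<in>G. \<forall>q\<in>G. p \<circ> q \<in> G) \<and> (\<forall>p\<in>G. Hilbert_Choice.inv p \<in> G)"

definition mat_trace :: "complex mat \<Rightarrow> complex" where
  "mat_trace A = (\<Sum>i<dim_row A. A $$ (i, i))"

definition is_character :: "(nat \<Rightarrow> nat) set \<Rightarrow> ((nat \<Rightarrow> nat) \<Rightarrow> complex) \<Rightarrow> bool" where
  "is_character G \<chi> \<longleftrightarrow> (\<exists>m::nat. m \<ge> 1 \<and> (\<exists>\<rho> :: (nat \<Rightarrow> nat) \<Rightarrow> complex mat.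
      (\<forall>\<sigma>\<in>G. \<rho> \<sigma> \<in> carrier_mat m m \<and> invertible_mat (\<rho> \<sigma>)) \<and>
      (\<forall>\<sigma>\<in>G. \<forall>\<tau>\<in>G. \<rho> (\<sigma> \<circ> \<tau>) = \<rho> \<sigma> * \<rho> \<tau>) \<and>
      (\<forall>\<sigma>\<in>G. \<chi> \<sigma> = mat_trace (\<rho> \<sigma>))))"

definition gen_matrix_fun :: "nat \<Rightarrow> (nat \<Rightarrow> nat) set \<Rightarrow> ((nat \<Rightarrow> nat) \<Rightarrow> complex) \<Rightarrow> complex mat \<Rightarrow> complex" where
  "gen_matrix_fun n G \<chi> A = (\<Sum>\<sigma>\<in>G. \<chi> \<sigma> * (\<Prod>i<n. A $$ (i, \<sigma> i)))"

end

theory Submission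
  imports Defs "HOL-Combinatorics.Cycles" "Jordan_Normal_Form.Schur_Decomposition"
begin

text \<open>
  Evaluating \<open>d\<close> at the permutation matrix \<open>P(\<sigma>)\<close> of \<open>\<sigma> \<in> G\<close> gives \<open>\<chi>(\<sigma>)\<close>, and
  \<open>P(\<sigma>)\<^sup>T = P(\<sigma>\<^sup>-\<^sup>1)\<close>; together with the expansion of \<open>d(A\<^sup>T)\<close> as a sum over \<open>\<sigma>\<^sup>-\<^sup>1\<close>
  this shows that (1) holds iff \<open>\<chi>(\<sigma>\<^sup>-\<^sup>1) = \<chi>(\<sigma>)\<close> on \<open>G\<close>. For symmetric \<open>A, B\<close> we have
  \<open>(AB)\<^sup>T = BA\<close>, so (1) implies (2). Conversely every permutation is a product \<open>\<sigma> = a b\<close> of two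
  involutions, so \<open>P(\<sigma>)\<close> and \<open>P(\<sigma>\<^sup>-\<^sup>1)\<close> are the two products of the symmetric matrices
  \<open>P(a)\<close> and \<open>P(b)\<close>, and (2) gives \<open>\<chi>(\<sigma>) = \<chi>(\<sigma>\<^sup>-\<^sup>1)\<close>. Finally \<open>\<rho>(\<sigma>)\<close> has finite
  order, so its eigenvalues are roots of unity and \<open>\<chi>(\<sigma>\<^sup>-\<^sup>1)\<close> is the complex conjugate of
  \<open>\<chi>(\<sigma>)\<close>: the condition \<open>\<chi>(\<sigma>\<^sup>-\<^sup>1) = \<chi>(\<sigma>)\<close> says exactly that \<open>\<chi>\<close> is real.
\<close>

lemma involution_permutes:
  assumes "f \<circ> f = id" and "\<And>x. x \<notin> S \<Longrightarrow> f x = x"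
  shows "f permutes S"
  unfolding permutes_def using assms by (metis comp_apply id_apply)

lemma periodic_funpow_cancel:
  fixes s :: "'a \<Rightarrow> 'a"
  assumes "s ^^ K = id" and "K > 0"
  shows "(s ^^ ((K - 1) * k)) ((s ^^ k) x) = x" and "(s ^^ k) ((s ^^ ((K - 1) * k)) x) = x"
proof -
  have "(K - 1) * k + k = K * k" using \<open>K > 0\<close> by (cases K) auto
  hence "s ^^ ((K - 1) * k + k) = id" by (simp add: funpow_mult[symmetric] assms(1))
  hence "s ^^ ((K - 1) * k) \<circ> s ^^ k = id" "s ^^ k \<circ> s ^^ ((K - 1) * k) = id"
    by (metis funpow_add add.commute)+
  thus "(s ^^ ((K - 1) * k)) ((s ^^ k) x) = x" "(s ^^ k) ((s ^^ ((K - 1) * k)) x) = x"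
    by (metis comp_apply id_apply)+
qed

lemma periodic_funpow_inj:
  fixes s :: "'a \<Rightarrow> 'a"
  assumes "s ^^ K = id" and "K > 0" and "(s ^^ k) u = (s ^^ k) v"
  shows "u = v"
  using arg_cong[OF assms(3), of "s ^^ ((K - 1) * k)"] periodic_funpow_cancel(1)[OF assms(1,2)]
  by metis

lemma periodic_orbit_representative:
  fixes s :: "'a \<Rightarrow> 'a"
  assumes "s ^^ K = id" and "K > 0"
  obtains r where "\<And>j y. r ((s ^^ j) y) = r y" and "\<And>y. \<exists>k. (s ^^ k) (r y) = y"
    and "\<And>y. s y = y \<Longrightarrow> r y = y"
proof -
  note cancel = periodic_funpow_cancel[OF assms]
  define orb where "orb y = range (\<lambda>k. (s ^^ k) y)" for y
  have in_orb: "y \<in> orb y" for y unfolding orb_def by (metis funpow_0 rangeI)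
  have orb_funpow: "orb ((s ^^ j) y) = orb y" for j y
  proof
    show "orb ((s ^^ j) y) \<subseteq> orb y"
      unfolding orb_def by (auto simp flip: funpow_add[unfolded fun_eq_iff comp_apply])
    have "(s ^^ k) y = (s ^^ (k + (K - 1) * j)) ((s ^^ j) y)" for k
      by (simp only: funpow_add comp_apply cancel)
    thus "orb y \<subseteq> orb ((s ^^ j) y)" unfolding orb_def by blast
  qed
  define r where "r y = (SOME z. z \<in> orb y)" for y
  have r_funpow: "r ((s ^^ j) y) = r y" for j y
    unfolding r_def orb_funpow ..
  moreover have "\<exists>k. (s ^^ k) (r y) = y" for y
  proof -
    have "r y \<in> orb y" unfolding r_def using in_orb by (rule someI)
    then obtain j where "r y = (s ^^ j) y" unfolding orb_def by blast
    hence "y \<in> orb (r y)" using in_orb orb_funpow by simp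
    thus ?thesis unfolding orb_def by (auto intro: sym)
  qed
  moreover have "r y = y" if "s y = y" for y
  proof -
    have "(s ^^ k) y = y" for k using that by (induction k) simp_all
    hence "orb y = {y}" unfolding orb_def by auto
    thus "r y = y" unfolding r_def by simp
  qed
  ultimately show ?thesis using that by blast
qed

text \<open>The reflection fixes a representative \<open>r\<close> of each orbit and maps \<open>s\<^sup>k r\<close> to \<open>s\<^sup>-\<^sup>k r\<close>.\<close>

lemma periodic_funpow_reflection:
  fixes s :: "'a \<Rightarrow> 'a"
  assumes "s ^^ K = id" and "K > 0"
  obtains t where "t \<circ> t = id" and "\<And>y. s (t (s y)) = t y" and "\<And>y. s y = y \<Longrightarrow> t y = y"
proof -
  note cancel = periodic_funpow_cancel[OF assms] and funpow_inj = periodic_funpow_inj[OF assms]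
  obtain r where r_funpow: "\<And>j y. r ((s ^^ j) y) = r y" and "\<And>y. \<exists>k. (s ^^ k) (r y) = y"
    and r_fixed: "\<And>y. s y = y \<Longrightarrow> r y = y"
    using periodic_orbit_representative[OF assms] by blast
  then obtain m where m: "(s ^^ m y) (r y) = y" for y by metis
  define neg where "neg k = (K - 1) * k" for k
  define t where "t y = (s ^^ neg (m y)) (r y)" for y
  have r_idem: "r (r y) = r y" for y using r_funpow m by metis
  have r_t: "r (t y) = r y" for y unfolding t_def r_funpow r_idem ..
  have t_spec: "(s ^^ k) (t y) = r y" if "(s ^^ k) (r y) = y" for k y
  proof -
    have "(s ^^ k) (t y) = (s ^^ neg (m y)) ((s ^^ k) (r y))"
      unfolding t_def by (simp flip: funpow_add[unfolded fun_eq_iff comp_apply] add: add.commute)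
    also have "\<dots> = r y" using m[of y] that cancel unfolding neg_def by metis
    finally show ?thesis .
  qed
  show ?thesis
  proof
    show "t \<circ> t = id"
    proof
      fix y
      have "(s ^^ neg (m y)) (r (t y)) = t y" by (simp only: t_def r_funpow r_idem)
      hence "(s ^^ neg (m y)) (t (t y)) = r y" using t_spec r_t by metis
      also have "r y = (s ^^ neg (m y)) y" using cancel m unfolding neg_def by metis
      finally show "(t \<circ> t) y = id y" using funpow_inj by simp
    qed
  next
    fix y
    have "(s ^^ Suc (m y)) (r (s y)) = s y" using m[of y] r_funpow[of 1 y] by simp
    hence "(s ^^ Suc (m y)) (t (s y)) = r y" using t_spec r_funpow[of 1 y] by fastforce
    hence "(s ^^ m y) (s (t (s y))) = (s ^^ m y) (t y)"
      using t_spec[OF m[of y]] by (simp add: funpow_swap1)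
    thus "s (t (s y)) = t y" by (rule funpow_inj)
  next
    fix y assume "s y = y"
    hence "(s ^^ k) y = y" for k by (induction k) simp_all
    thus "t y = y" unfolding t_def r_fixed[OF \<open>s y = y\<close>] by simp
  qed
qed

lemma permutes_comp_involutions:
  assumes "s permutes S" and "finite S"
  obtains a b where "a permutes S" "b permutes S" "a \<circ> a = id" "b \<circ> b = id" "s = a \<circ> b"
proof -
  obtain K where "s ^^ K = id" "K > 0"
    using permutation_is_nilpotent assms permutation_permutes by metis
  then obtain t where tt: "t \<circ> t = id" and sts: "\<And>y. s (t (s y)) = t y"
    and fix_t: "\<And>y. s y = y \<Longrightarrow> t y = y"
    using periodic_funpow_reflection by blast
  have fix_s: "s y = y" if "y \<notin> S" for y using assms(1) that by (rule permutes_not_in)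
  have a_inv: "s \<circ> t \<circ> (s \<circ> t) = id" using sts tt by (auto simp: fun_eq_iff)
  have t_perm: "t permutes S" using tt fix_t fix_s by (intro involution_permutes) auto
  have a_perm: "s \<circ> t permutes S" using a_inv fix_t fix_s by (intro involution_permutes) auto
  have "s = (s \<circ> t) \<circ> t" using tt by (simp add: comp_assoc)
  with a_perm t_perm a_inv tt show ?thesis by (rule that)
qed

lemma mat_trace_mult_comm:
  fixes A B :: "complex mat"
  assumes "A \<in> carrier_mat m n" and "B \<in> carrier_mat n m"
  shows "mat_trace (A * B) = mat_trace (B * A)"
proof -
  have "mat_trace (A * B) = (\<Sum>i<m. \<Sum>k<n. A $$ (i, k) * B $$ (k, i))"
    unfolding mat_trace_def using assms
    by (auto simp: scalar_prod_def atLeast0LessThan intro!: sum.cong)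
  also have "\<dots> = (\<Sum>k<n. \<Sum>i<m. B $$ (k, i) * A $$ (i, k))"
    by (subst sum.swap) (simp add: mult.commute)
  also have "\<dots> = mat_trace (B * A)"
    unfolding mat_trace_def using assms
    by (auto simp: scalar_prod_def atLeast0LessThan intro!: sum.cong)
  finally show ?thesis .
qed

lemma mat_trace_similar_mat_wit:
  assumes "similar_mat_wit A B P Q"
  shows "mat_trace A = mat_trace B"
proof -
  obtain n where A: "A = P * B * Q" and QP: "Q * P = 1\<^sub>m n" and
    carrier: "B \<in> carrier_mat n n" "P \<in> carrier_mat n n" "Q \<in> carrier_mat n n"
    using similar_mat_witD[OF refl assms] by metis
  have "mat_trace A = mat_trace (P * (B * Q))" using A carrier by (simp add: assoc_mult_mat)
  also have "\<dots> = mat_trace (B * Q * P)" by (rule mat_trace_mult_comm) (use carrier in auto)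
  also have "B * Q * P = B" using carrier QP by (simp add: assoc_mult_mat)
  finally show ?thesis .
qed

lemma upper_triangular_mult:
  fixes A B :: "'a :: comm_semiring_0 mat"
  assumes A: "A \<in> carrier_mat n n" and B: "B \<in> carrier_mat n n"
    and "upper_triangular A" and "upper_triangular B"
  shows "upper_triangular (A * B)"
    and "i < n \<Longrightarrow> (A * B) $$ (i, i) = A $$ (i, i) * B $$ (i, i)"
proof -
  have entry: "(A * B) $$ (i, j) = (\<Sum>k<n. A $$ (i, k) * B $$ (k, j))" if "i < n" "j < n" for i j
    using A B that by (auto simp: scalar_prod_def atLeast0LessThan intro!: sum.cong)
  have vanish: "A $$ (i, k) * B $$ (k, j) = 0" if "k < n" "i < n" "k < i \<or> j < k" for i j k
    using that A B upper_triangularD[OF assms(3)] upper_triangularD[OF assms(4)] by auto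
  show "upper_triangular (A * B)"
  proof
    fix i j assume "j < i" "i < dim_row (A * B)"
    moreover have "k < i \<or> j < k" for k using \<open>j < i\<close> by auto
    ultimately show "(A * B) $$ (i, j) = 0"
      using A entry[of i j] vanish[of _ i j] by (auto intro!: sum.neutral)
  qed
  assume "i < n"
  have "(\<Sum>k<n. A $$ (i, k) * B $$ (k, i)) = (\<Sum>k<n. if k = i then A $$ (i, i) * B $$ (i, i) else 0)"
    using vanish[of _ i i] \<open>i < n\<close> by (intro sum.cong) (auto simp: neq_iff)
  thus "(A * B) $$ (i, i) = A $$ (i, i) * B $$ (i, i)" using entry \<open>i < n\<close> by simp
qed

lemma upper_triangular_pow_mat:
  fixes B :: "'a :: comm_semiring_1 mat"
  assumes B: "B \<in> carrier_mat n n" and "upper_triangular B"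
  shows "upper_triangular (B ^\<^sub>m k) \<and> (\<forall>i<n. (B ^\<^sub>m k) $$ (i, i) = B $$ (i, i) ^ k)"
proof (induction k)
  case 0 thus ?case using B by auto
next
  case (Suc k)
  have "B ^\<^sub>m k \<in> carrier_mat n n" using B by simp
  thus ?case using upper_triangular_mult[OF _ B] Suc assms(2) by (auto simp: mult.commute)
qed

lemma root_of_unity_pow_pred:
  fixes z :: complex
  assumes "z ^ K = 1" and "K > 0"
  shows "z ^ (K - 1) = cnj z"
proof -
  have "norm z ^ K = 1" using assms(1) by (metis norm_one norm_power)
  hence "norm z = 1" using assms(2) power_eq_imp_eq_base[of "norm z" K 1] by simp
  hence "z * cnj z = 1" by (simp add: complex_norm_square[symmetric])
  moreover have "z * z ^ (K - 1) = 1" using assms by (cases K) auto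
  ultimately show ?thesis using \<open>norm z = 1\<close> by (metis mult_left_cancel norm_zero zero_neq_one)
qed

text \<open>Triangularise \<open>M\<close> by a Schur decomposition: its diagonal entries are roots of unity.\<close>

lemma mat_trace_pow_pred:
  fixes M :: "complex mat"
  assumes M: "M \<in> carrier_mat m m" and "M ^\<^sub>m K = 1\<^sub>m m" and "K > 0"
  shows "mat_trace (M ^\<^sub>m (K - 1)) = cnj (mat_trace M)"
proof -
  obtain es where "char_poly M = (\<Prod>a \<leftarrow> es. [:- a, 1:])"
    using char_poly_factorized[OF M] by blast
  then obtain B P Q where wit: "similar_mat_wit M B P Q" and "upper_triangular B"
    using schur_decomposition[OF M] by (metis prod_cases3)
  have B: "B \<in> carrier_mat m m" using similar_mat_witD2[OF M wit] by simp
  note diag_pow = upper_triangular_pow_mat[OF B \<open>upper_triangular B\<close>]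
  have trace_pow: "mat_trace (M ^\<^sub>m k) = (\<Sum>i<m. B $$ (i, i) ^ k)" for k
    using mat_trace_similar_mat_wit[OF similar_mat_wit_pow[OF wit]] diag_pow B
    by (simp add: mat_trace_def)
  have "B ^\<^sub>m K = Q * M ^\<^sub>m K * P"
    by (rule similar_mat_wit_pow_id[OF similar_mat_wit_sym[OF wit]])
  also have "\<dots> = 1\<^sub>m m" using similar_mat_witD2[OF M wit] assms(2) by simp
  finally have BK: "B ^\<^sub>m K = 1\<^sub>m m" .
  have "B $$ (i, i) ^ K = 1" if "i < m" for i
    using diag_pow[of K] that by (simp add: BK)
  hence "B $$ (i, i) ^ (K - 1) = cnj (B $$ (i, i))" if "i < m" for i
    using root_of_unity_pow_pred \<open>K > 0\<close> that by blast
  thus ?thesis using trace_pow[of "K - 1"] trace_pow[of 1] by simp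
qed

lemma perm_subgroupD:
  assumes "perm_subgroup n G"
  shows perm_subgroup_permutes: "\<sigma> \<in> G \<Longrightarrow> \<sigma> permutes {0..<n}"
    and perm_subgroup_id: "id \<in> G"
    and perm_subgroup_comp: "\<sigma> \<in> G \<Longrightarrow> \<tau> \<in> G \<Longrightarrow> \<sigma> \<circ> \<tau> \<in> G"
    and perm_subgroup_inv: "\<sigma> \<in> G \<Longrightarrow> Hilbert_Choice.inv \<sigma> \<in> G"
  using assms unfolding perm_subgroup_def by auto

lemma perm_subgroup_finite: "perm_subgroup n G \<Longrightarrow> finite G"
  using finite_permutations[of "{0..<n}"] unfolding perm_subgroup_def by (auto intro: finite_subset)

lemma perm_subgroup_funpow: "perm_subgroup n G \<Longrightarrow> \<sigma> \<in> G \<Longrightarrow> \<sigma> ^^ k \<in> G"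
  by (induction k) (simp_all add: perm_subgroup_id perm_subgroup_comp)

lemma invertible_idempotent_mat_eq_one:
  fixes X :: "'a :: semiring_1 mat"
  assumes X: "X \<in> carrier_mat m m" and "invertible_mat X" and "X * X = X"
  shows "X = 1\<^sub>m m"
proof -
  obtain Y where XY: "X * Y = 1\<^sub>m m" and YX: "Y * X = 1\<^sub>m (dim_row Y)"
    using assms(2) X unfolding invertible_mat_def inverts_mat_def by auto
  have Y: "Y \<in> carrier_mat m m"
    using arg_cong[OF XY, of dim_col] arg_cong[OF YX, of dim_col] X by auto
  have "X = X * X * Y" using XY X Y by (simp add: assoc_mult_mat[of _ m m _ m _ m])
  thus ?thesis using assms(3) XY by simp
qed

lemma inv_eq_funpow_pred:
  assumes "f ^^ K = id" and "K > 0"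
  shows "Hilbert_Choice.inv f = f ^^ (K - 1)"
proof (rule inv_unique_comp)
  have "f ^^ Suc (K - 1) = id" using assms by simp
  thus "f \<circ> f ^^ (K - 1) = id" and "f ^^ (K - 1) \<circ> f = id"
    by (metis funpow.simps(2) funpow_Suc_right)+
qed

lemma character_inv:
  assumes G: "perm_subgroup n G" and "is_character G \<chi>" and "\<sigma> \<in> G"
  shows "\<chi> (Hilbert_Choice.inv \<sigma>) = cnj (\<chi> \<sigma>)"
proof -
  obtain m \<rho> where carrier: "\<And>\<sigma>. \<sigma> \<in> G \<Longrightarrow> \<rho> \<sigma> \<in> carrier_mat m m \<and> invertible_mat (\<rho> \<sigma>)"
    and hom: "\<And>\<sigma> \<tau>. \<sigma> \<in> G \<Longrightarrow> \<tau> \<in> G \<Longrightarrow> \<rho> (\<sigma> \<circ> \<tau>) = \<rho> \<sigma> * \<rho> \<tau>"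
    and trace: "\<And>\<sigma>. \<sigma> \<in> G \<Longrightarrow> \<chi> \<sigma> = mat_trace (\<rho> \<sigma>)"
    using assms(2) unfolding is_character_def by blast
  have \<rho>_id: "\<rho> id = 1\<^sub>m m"
    using carrier hom[of id id] perm_subgroup_id[OF G] by (intro invertible_idempotent_mat_eq_one) auto
  have \<rho>_funpow: "\<rho> (\<sigma> ^^ k) = \<rho> \<sigma> ^\<^sub>m k" for k
  proof (induction k)
    case 0
    show ?case using carrier[OF \<open>\<sigma> \<in> G\<close>] by (simp only: funpow.simps(1) \<rho>_id) auto
  next
    case (Suc k)
    show ?case
      unfolding funpow_Suc_right hom[OF perm_subgroup_funpow[OF G \<open>\<sigma> \<in> G\<close>] \<open>\<sigma> \<in> G\<close>] Suc
      by simp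
  qed
  obtain K where "\<sigma> ^^ K = id" "K > 0"
    using permutation_is_nilpotent perm_subgroup_permutes[OF G \<open>\<sigma> \<in> G\<close>]
    by (metis finite_atLeastLessThan permutation_permutes)
  hence "\<rho> \<sigma> ^\<^sub>m K = 1\<^sub>m m" using \<rho>_funpow \<rho>_id by metis
  hence "mat_trace (\<rho> \<sigma> ^\<^sub>m (K - 1)) = cnj (mat_trace (\<rho> \<sigma>))"
    using carrier[OF \<open>\<sigma> \<in> G\<close>] \<open>K > 0\<close> by (intro mat_trace_pow_pred) auto
  thus ?thesis
    using inv_eq_funpow_pred[OF \<open>\<sigma> ^^ K = id\<close> \<open>K > 0\<close>] trace \<rho>_funpow
      perm_subgroup_funpow[OF G \<open>\<sigma> \<in> G\<close>] \<open>\<sigma> \<in> G\<close> by metis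
qed

definition perm_mat :: "nat \<Rightarrow> (nat \<Rightarrow> nat) \<Rightarrow> 'a :: {zero, one} mat" where
  "perm_mat n p = mat n n (\<lambda>(i, j). if j = p i then 1 else 0)"

lemma perm_mat_carrier [simp]: "perm_mat n p \<in> carrier_mat n n"
  and dim_perm_mat [simp]: "dim_row (perm_mat n p) = n" "dim_col (perm_mat n p) = n"
  and index_perm_mat [simp]: "i < n \<Longrightarrow> j < n \<Longrightarrow> perm_mat n p $$ (i, j) = (if j = p i then 1 else 0)"
  unfolding perm_mat_def by simp_all

lemma transpose_perm_mat:
  assumes "p permutes {0..<n}"
  shows "transpose_mat (perm_mat n p) = perm_mat n (Hilbert_Choice.inv p)"
proof (rule eq_matI)
  fix i j assume "i < dim_row (perm_mat n (Hilbert_Choice.inv p))" "j < dim_col (perm_mat n (Hilbert_Choice.inv p))"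
  moreover have "i = p j \<longleftrightarrow> j = Hilbert_Choice.inv p i" using permutes_inverses[OF assms] by metis
  ultimately show "transpose_mat (perm_mat n p) $$ (i, j) = perm_mat n (Hilbert_Choice.inv p) $$ (i, j)"
    by simp
qed simp_all

lemma perm_mat_mult:
  assumes "p permutes {0..<n}"
  shows "(perm_mat n p * perm_mat n q :: 'a :: semiring_1 mat) = perm_mat n (q \<circ> p)"
proof (rule eq_matI)
  fix i j assume "i < dim_row (perm_mat n (q \<circ> p))" "j < dim_col (perm_mat n (q \<circ> p))"
  hence ij: "i < n" "j < n" by simp_all
  have "p i \<in> {0..<n}" using assms ij(1) by (simp add: permutes_in_image)
  have "(perm_mat n p * perm_mat n q :: 'a mat) $$ (i, j)
      = (\<Sum>k\<in>{0..<n}. perm_mat n p $$ (i, k) * perm_mat n q $$ (k, j))"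
    using ij by (simp add: scalar_prod_def)
  also have "\<dots> = (\<Sum>k\<in>{0..<n}. if k = p i then (if j = q (p i) then 1 else 0) else 0)"
    using ij by (intro sum.cong) auto
  also have "\<dots> = perm_mat n (q \<circ> p) $$ (i, j)" using ij \<open>p i \<in> {0..<n}\<close> by simp
  finally show "(perm_mat n p * perm_mat n q :: 'a mat) $$ (i, j) = perm_mat n (q \<circ> p) $$ (i, j)" .
qed simp_all

lemma prod_perm_mat:
  assumes "p permutes {0..<n}" and "\<sigma> permutes {0..<n}"
  shows "(\<Prod>i<n. (perm_mat n p :: 'a :: comm_semiring_1 mat) $$ (i, \<sigma> i)) = (if \<sigma> = p then 1 else 0)"
proof (cases "\<sigma> = p")
  case True
  have "(\<Prod>i<n. (perm_mat n p :: 'a mat) $$ (i, \<sigma> i)) = (\<Prod>i<n. 1)"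
    using assms(2) by (intro prod.cong refl) (simp add: True permutes_in_image)
  thus ?thesis using True by simp
next
  case False
  have "\<exists>i<n. \<sigma> i \<noteq> p i"
  proof (rule ccontr)
    assume "\<not> ?thesis"
    hence "\<sigma> x = p x" for x using assms by (cases "x < n") (auto simp: permutes_not_in)
    with False show False by auto
  qed
  then obtain i where "i < n" "\<sigma> i \<noteq> p i" by blast
  moreover have "\<sigma> i < n" using assms(2) \<open>i < n\<close> by (simp add: permutes_in_image)
  ultimately have "(perm_mat n p :: 'a mat) $$ (i, \<sigma> i) = 0" by simp
  hence "(\<Prod>i<n. (perm_mat n p :: 'a mat) $$ (i, \<sigma> i)) = 0"
    using \<open>i < n\<close> by (intro prod_zero) (auto simp del: index_perm_mat)
  thus ?thesis using False by (simp only: if_False)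
qed

lemma gen_matrix_fun_perm_mat:
  assumes G: "perm_subgroup n G" and "\<sigma> \<in> G"
  shows "gen_matrix_fun n G \<chi> (perm_mat n \<sigma>) = \<chi> \<sigma>"
proof -
  have "gen_matrix_fun n G \<chi> (perm_mat n \<sigma>) = (\<Sum>\<tau>\<in>G. if \<tau> = \<sigma> then \<chi> \<tau> else 0)"
    unfolding gen_matrix_fun_def
  proof (rule sum.cong[OF refl])
    fix \<tau> assume "\<tau> \<in> G"
    have "(\<Prod>i<n. (perm_mat n \<sigma> :: complex mat) $$ (i, \<tau> i)) = (if \<tau> = \<sigma> then 1 else 0)"
      using perm_subgroup_permutes[OF G \<open>\<sigma> \<in> G\<close>] perm_subgroup_permutes[OF G \<open>\<tau> \<in> G\<close>]
      by (rule prod_perm_mat)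
    thus "\<chi> \<tau> * (\<Prod>i<n. perm_mat n \<sigma> $$ (i, \<tau> i)) = (if \<tau> = \<sigma> then \<chi> \<tau> else 0)"
      by simp
  qed
  thus ?thesis using perm_subgroup_finite[OF G] \<open>\<sigma> \<in> G\<close> by (simp add: sum.delta')
qed

lemma gen_matrix_fun_transpose:
  assumes G: "perm_subgroup n G" and A: "A \<in> carrier_mat n n"
  shows "gen_matrix_fun n G \<chi> (transpose_mat A)
    = (\<Sum>\<sigma>\<in>G. \<chi> (Hilbert_Choice.inv \<sigma>) * (\<Prod>i<n. A $$ (i, \<sigma> i)))"
proof -
  have prod_transpose: "(\<Prod>i<n. transpose_mat A $$ (i, \<sigma> i)) = (\<Prod>i<n. A $$ (i, Hilbert_Choice.inv \<sigma> i))"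
    if "\<sigma> permutes {0..<n}" for \<sigma>
  proof -
    have "transpose_mat A $$ (i, \<sigma> i) = A $$ (\<sigma> i, Hilbert_Choice.inv \<sigma> (\<sigma> i))" if "i < n" for i
    proof -
      have "\<sigma> i < n" using \<open>\<sigma> permutes {0..<n}\<close> \<open>i < n\<close> permutes_in_image by fastforce
      thus ?thesis using A \<open>i < n\<close> permutes_inverses(2)[OF \<open>\<sigma> permutes {0..<n}\<close>] by simp
    qed
    hence "(\<Prod>i<n. transpose_mat A $$ (i, \<sigma> i))
        = (\<Prod>i<n. A $$ (\<sigma> i, Hilbert_Choice.inv \<sigma> (\<sigma> i)))" by simp
    also have "\<dots> = (\<Prod>i<n. A $$ (i, Hilbert_Choice.inv \<sigma> i))"
      using permutes_imp_bij[OF that] by (intro prod.reindex_bij_betw) (simp add: atLeast0LessThan)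
    finally show ?thesis .
  qed
  have bij: "bij \<sigma>" if "\<sigma> \<in> G" for \<sigma>
    using perm_subgroup_permutes[OF G that] by (rule permutes_bij)
  have "gen_matrix_fun n G \<chi> (transpose_mat A)
      = (\<Sum>\<sigma>\<in>G. \<chi> \<sigma> * (\<Prod>i<n. A $$ (i, Hilbert_Choice.inv \<sigma> i)))"
    unfolding gen_matrix_fun_def
    by (intro sum.cong refl) (simp add: prod_transpose perm_subgroup_permutes[OF G])
  also have "\<dots> = (\<Sum>\<sigma>\<in>G. \<chi> (Hilbert_Choice.inv \<sigma>) * (\<Prod>i<n. A $$ (i, \<sigma> i)))"
    by (rule sum.reindex_bij_witness[where i = Hilbert_Choice.inv and j = Hilbert_Choice.inv])
      (simp_all add: perm_subgroup_inv[OF G] inv_inv_eq bij)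
  finally show ?thesis .
qed

lemma gen_matrix_fun_transpose_invariant_iff:
  assumes G: "perm_subgroup n G"
  shows "(\<forall>A \<in> carrier_mat n n. gen_matrix_fun n G \<chi> A = gen_matrix_fun n G \<chi> (transpose_mat A))
    \<longleftrightarrow> (\<forall>\<sigma>\<in>G. \<chi> (Hilbert_Choice.inv \<sigma>) = \<chi> \<sigma>)"
proof
  assume transpose_invariant: "\<forall>A \<in> carrier_mat n n.
    gen_matrix_fun n G \<chi> A = gen_matrix_fun n G \<chi> (transpose_mat A)"
  show "\<forall>\<sigma>\<in>G. \<chi> (Hilbert_Choice.inv \<sigma>) = \<chi> \<sigma>"
  proof
    fix \<sigma> assume "\<sigma> \<in> G"
    have "\<chi> \<sigma> = gen_matrix_fun n G \<chi> (perm_mat n \<sigma>)"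
      using gen_matrix_fun_perm_mat[OF G \<open>\<sigma> \<in> G\<close>] ..
    also have "\<dots> = gen_matrix_fun n G \<chi> (transpose_mat (perm_mat n \<sigma>))"
      using transpose_invariant perm_mat_carrier by blast
    also have "\<dots> = gen_matrix_fun n G \<chi> (perm_mat n (Hilbert_Choice.inv \<sigma>))"
      by (simp only: transpose_perm_mat[OF perm_subgroup_permutes[OF G \<open>\<sigma> \<in> G\<close>]])
    also have "\<dots> = \<chi> (Hilbert_Choice.inv \<sigma>)"
      using G perm_subgroup_inv[OF G \<open>\<sigma> \<in> G\<close>] by (rule gen_matrix_fun_perm_mat)
    finally show "\<chi> (Hilbert_Choice.inv \<sigma>) = \<chi> \<sigma>" ..
  qed
next
  assume inv_invariant: "\<forall>\<sigma>\<in>G. \<chi> (Hilbert_Choice.inv \<sigma>) = \<chi> \<sigma>"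
  show "\<forall>A \<in> carrier_mat n n. gen_matrix_fun n G \<chi> A = gen_matrix_fun n G \<chi> (transpose_mat A)"
  proof
    fix A :: "complex mat" assume "A \<in> carrier_mat n n"
    have "gen_matrix_fun n G \<chi> (transpose_mat A)
        = (\<Sum>\<sigma>\<in>G. \<chi> (Hilbert_Choice.inv \<sigma>) * (\<Prod>i<n. A $$ (i, \<sigma> i)))"
      using G \<open>A \<in> carrier_mat n n\<close> by (rule gen_matrix_fun_transpose)
    also have "\<dots> = gen_matrix_fun n G \<chi> A"
      unfolding gen_matrix_fun_def by (intro sum.cong refl) (simp add: inv_invariant)
    finally show "gen_matrix_fun n G \<chi> A = gen_matrix_fun n G \<chi> (transpose_mat A)" ..
  qed
qed

lemma transpose_perm_mat_involution:
  assumes "c permutes {0..<n}" and "c \<circ> c = id"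
  shows "transpose_mat (perm_mat n c) = perm_mat n c"
  using transpose_perm_mat[OF assms(1)] inv_unique_comp[OF assms(2) assms(2)] by simp

text \<open>With \<open>\<sigma> = a \<circ> b\<close> for involutions \<open>a\<close>, \<open>b\<close>, the factors are the permutation matrices of
  \<open>b\<close> and \<open>a\<close>.\<close>

lemma perm_mat_symmetric_factorization:
  assumes "\<sigma> permutes {0..<n}"
  obtains A B :: "'a :: semiring_1 mat"
  where "A \<in> carrier_mat n n" and "B \<in> carrier_mat n n"
    and "transpose_mat A = A" and "transpose_mat B = B"
    and "perm_mat n \<sigma> = A * B" and "perm_mat n (Hilbert_Choice.inv \<sigma>) = B * A"
proof -
  obtain a b where a: "a permutes {0..<n}" "a \<circ> a = id" and b: "b permutes {0..<n}" "b \<circ> b = id"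
    and "\<sigma> = a \<circ> b"
    using permutes_comp_involutions[OF assms] by (metis finite_atLeastLessThan)
  have "a (a x) = x" "b (b x) = x" for x using fun_cong[OF a(2)] fun_cong[OF b(2)] by simp_all
  hence "Hilbert_Choice.inv \<sigma> = b \<circ> a"
    unfolding \<open>\<sigma> = a \<circ> b\<close> by (intro inv_unique_comp) (simp_all add: fun_eq_iff)
  show ?thesis
  proof (rule that)
    show "perm_mat n \<sigma> = (perm_mat n b * perm_mat n a :: 'a mat)"
      using \<open>\<sigma> = a \<circ> b\<close> by (simp add: perm_mat_mult[OF b(1)])
    show "perm_mat n (Hilbert_Choice.inv \<sigma>) = (perm_mat n a * perm_mat n b :: 'a mat)"
      using \<open>Hilbert_Choice.inv \<sigma> = b \<circ> a\<close> by (simp add: perm_mat_mult[OF a(1)])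
  qed (simp_all add: transpose_perm_mat_involution a b)
qed

lemma gen_matrix_fun_symmetric_commute_iff:
  assumes G: "perm_subgroup n G"
  shows "(\<forall>A \<in> carrier_mat n n. \<forall>B \<in> carrier_mat n n.
            transpose_mat A = A \<longrightarrow> transpose_mat B = B \<longrightarrow>
            gen_matrix_fun n G \<chi> (A * B) = gen_matrix_fun n G \<chi> (B * A))
    \<longleftrightarrow> (\<forall>\<sigma>\<in>G. \<chi> (Hilbert_Choice.inv \<sigma>) = \<chi> \<sigma>)"
proof
  assume commute: "\<forall>A \<in> carrier_mat n n. \<forall>B \<in> carrier_mat n n.
    transpose_mat A = A \<longrightarrow> transpose_mat B = B \<longrightarrow>
    gen_matrix_fun n G \<chi> (A * B) = gen_matrix_fun n G \<chi> (B * A)"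
  show "\<forall>\<sigma>\<in>G. \<chi> (Hilbert_Choice.inv \<sigma>) = \<chi> \<sigma>"
  proof
    fix \<sigma> assume "\<sigma> \<in> G"
    obtain A B :: "complex mat" where "A \<in> carrier_mat n n" "B \<in> carrier_mat n n"
      "transpose_mat A = A" "transpose_mat B = B"
      and \<sigma>_AB: "perm_mat n \<sigma> = A * B" and inv_\<sigma>_BA: "perm_mat n (Hilbert_Choice.inv \<sigma>) = B * A"
      using perm_mat_symmetric_factorization[OF perm_subgroup_permutes[OF G \<open>\<sigma> \<in> G\<close>]] by blast
    have "\<chi> \<sigma> = gen_matrix_fun n G \<chi> (A * B)"
      using gen_matrix_fun_perm_mat[OF G \<open>\<sigma> \<in> G\<close>] \<sigma>_AB by simp
    also have "\<dots> = gen_matrix_fun n G \<chi> (B * A)"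
      using commute \<open>A \<in> carrier_mat n n\<close> \<open>B \<in> carrier_mat n n\<close>
        \<open>transpose_mat A = A\<close> \<open>transpose_mat B = B\<close> by blast
    also have "\<dots> = \<chi> (Hilbert_Choice.inv \<sigma>)"
      using gen_matrix_fun_perm_mat[OF G perm_subgroup_inv[OF G \<open>\<sigma> \<in> G\<close>]] inv_\<sigma>_BA by simp
    finally show "\<chi> (Hilbert_Choice.inv \<sigma>) = \<chi> \<sigma>" ..
  qed
next
  assume "\<forall>\<sigma>\<in>G. \<chi> (Hilbert_Choice.inv \<sigma>) = \<chi> \<sigma>"
  hence transpose_invariant: "gen_matrix_fun n G \<chi> C = gen_matrix_fun n G \<chi> (transpose_mat C)"
    if "C \<in> carrier_mat n n" for C
    using gen_matrix_fun_transpose_invariant_iff[OF G] that by blast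
  show "\<forall>A \<in> carrier_mat n n. \<forall>B \<in> carrier_mat n n.
    transpose_mat A = A \<longrightarrow> transpose_mat B = B \<longrightarrow>
    gen_matrix_fun n G \<chi> (A * B) = gen_matrix_fun n G \<chi> (B * A)"
  proof (intro ballI impI)
    fix A B :: "complex mat" assume A: "A \<in> carrier_mat n n" and B: "B \<in> carrier_mat n n"
      and "transpose_mat A = A" "transpose_mat B = B"
    hence "transpose_mat (A * B) = B * A" using transpose_mult[OF A B] by simp
    thus "gen_matrix_fun n G \<chi> (A * B) = gen_matrix_fun n G \<chi> (B * A)"
      using transpose_invariant[of "A * B"] A B by simp
  qed
qed

theorem mainTheorem11:
  fixes n :: nat and G :: "(nat \<Rightarrow> nat) set" and \<chi> :: "(nat \<Rightarrow> nat) \<Rightarrow> complex"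
  assumes "n \<ge> 1" and "perm_subgroup n G" and "is_character G \<chi>"
  shows "((\<forall>A \<in> carrier_mat n n. gen_matrix_fun n G \<chi> A = gen_matrix_fun n G \<chi> (transpose_mat A))
           \<longleftrightarrow> (\<forall>A \<in> carrier_mat n n. \<forall>B \<in> carrier_mat n n.
                  transpose_mat A = A \<longrightarrow> transpose_mat B = B \<longrightarrow>
                  gen_matrix_fun n G \<chi> (A * B) = gen_matrix_fun n G \<chi> (B * A)))
       \<and> ((\<forall>A \<in> carrier_mat n n. \<forall>B \<in> carrier_mat n n.
                  transpose_mat A = A \<longrightarrow> transpose_mat B = B \<longrightarrow>
                  gen_matrix_fun n G \<chi> (A * B) = gen_matrix_fun n G \<chi> (B * A))
           \<longleftrightarrow> (\<forall>\<sigma>\<in>G. \<chi> \<sigma> \<in> \<real>))"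
proof -
  have "(\<forall>\<sigma>\<in>G. \<chi> (Hilbert_Choice.inv \<sigma>) = \<chi> \<sigma>) \<longleftrightarrow> (\<forall>\<sigma>\<in>G. \<chi> \<sigma> \<in> \<real>)"
    using character_inv[OF assms(2,3)] by (simp add: Reals_cnj_iff)
  thus ?thesis
    using gen_matrix_fun_transpose_invariant_iff[OF assms(2)]
      gen_matrix_fun_symmetric_commute_iff[OF assms(2)] by blast
qed

end
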